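(* Let $U_{\log}$ be the Riemann surface obtained from the universal covering of $\mathbb{P}^1\setminus\{-1,1\}$ by removing all preimages of $\infty$. Then $U_{\log}$ is conformally equivalent to $\mathbb{C}\setminus i\mathbb{Z}$, and the map $f_1\circ f_2$, where $f_2(z)=\frac{e^{\pi z}-1}{e^{\pi z}+1}$ for $z\in\mathbb{C}\setminus i\mathbb{Z}$ and $f_1(w)=\frac12(w+\frac1w)$ for $w\in\mathbb{C}\setminus\{-1,0,1\}$, is a covering map from $\mathbb{C}\setminus i\mathbb{Z}$ to $\mathbb{C}\setminus\{-1,1\}$. Moreover, for each $k\in\mathbb{Z}$: the lift of $\alpha_1$ with initial point $-\frac i2+ik$ is a curve joining $-\frac i2+ik$ with $-\frac i2+i(k+1)$, contained in the closed left half-plane, whose only points on the imaginary axis are its endpoints; the lift of $\alpha_2$ with initial point $-\frac i2+ik$ is a curve joining $-\frac i2+ik$ with $-\frac i2+i(k-1)$, contained in the closed right half-plane, whose only points on the imaginary axis are its endpoints.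
   Context: $a_1,a_2$ are the free generators of $\pi_1(\mathbb{C}\setminus\{-1,1\},0)$: $a_1$ is represented by a loop based at $0$ surrounding $-1$ once positively, $a_2$ by a loop based at $0$ surrounding $1$ once positively. $\alpha_1,\alpha_2$ are curves in $\mathbb{C}\setminus\{-1,1\}$ representing $a_1,a_2$ such that the initial and terminating point (both $0$) are the only points of the curve on the interval $(-1,1)$ and the only points of the curve on the imaginary axis. *)

theory Defs
  imports "HOL-Complex_Analysis.Complex_Analysis"
begin

definition iZ :: "complex set" where
  "iZ = {\<i> * of_int k | k. True}"

definition f2 :: "complex \<Rightarrow> complex" where
  "f2 z = (exp (of_real pi * z) - 1) / (exp (of_real pi * z) + 1)"

definition f1 :: "complex \<Rightarrow> complex" where
  "f1 w = (w + 1 / w) / 2"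

text \<open>The sphere minus {-1,1} is identified with the sphere
  minus {0,\<infinity>} via the Moebius map u \<mapsto> (u+1)/(u-1); the universal covering of the latter
  is exp : \<complex> \<rightarrow> \<complex>-{0}.  Hence the universal covering of the sphere minus {-1,1} is
  \<complex> with projection z \<mapsto> (exp z + 1)/(exp z - 1), and removing all preimages of \<infinity>
  (the points with exp z = 1) gives U_log with projection ulog_proj into \<complex>-{-1,1}.\<close>
definition U_log :: "complex set" where
  "U_log = {z. exp z \<noteq> 1}"

definition ulog_proj :: "complex \<Rightarrow> complex" where
  "ulog_proj z = (exp z + 1) / (exp z - 1)"

text \<open>Reference loops based at 0 representing the free generators a1, a2.\<close>
definition loop_a1 :: "real \<Rightarrow> complex" where
  "loop_a1 t = -1 + exp (2 * of_real pi * \<i> * of_real t)"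

definition loop_a2 :: "real \<Rightarrow> complex" where
  "loop_a2 t = 1 - exp (2 * of_real pi * \<i> * of_real t)"

definition admissible_rep :: "(real \<Rightarrow> complex) \<Rightarrow> (real \<Rightarrow> complex) \<Rightarrow> bool" where
  "admissible_rep \<alpha> c \<longleftrightarrow>
     path \<alpha> \<and> pathstart \<alpha> = 0 \<and> pathfinish \<alpha> = 0 \<and>
     path_image \<alpha> \<subseteq> - {-1, 1} \<and>
     homotopic_paths (- {-1, 1}) \<alpha> c \<and>
     (\<forall>t\<in>{0..1}. (Re (\<alpha> t) = 0 \<or> (Im (\<alpha> t) = 0 \<and> -1 < Re (\<alpha> t) \<and> Re (\<alpha> t) < 1))
        \<longrightarrow> t = 0 \<or> t = 1)"

definition is_lift :: "(real \<Rightarrow> complex) \<Rightarrow> complex \<Rightarrow> (real \<Rightarrow> complex) \<Rightarrow> bool" where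
  "is_lift \<alpha> z0 \<beta> \<longleftrightarrow> path \<beta> \<and> path_image \<beta> \<subseteq> - iZ \<and> pathstart \<beta> = z0 \<and>
     (\<forall>t\<in>{0..1}. f1 (f2 (\<beta> t)) = \<alpha> t)"

end

theory Submission
  imports Defs
begin

(* Substituting w = 2 pi z identifies C - iZ with U_log = {w. exp w \<noteq> 1}, and with
   E = exp (2 pi z) one has f1 (f2 z) = (E + 1) / (E - 1).  So f1 o f2 is the covering exp over
   C - {0, 1}, followed by the Moebius involution s \<mapsto> (s + 1) / (s - 1) of C - {0, 1} onto
   C - {-1, 1} and preceded by the scaling, hence a covering map.
   If \<beta> lifts a loop \<alpha>, then 2 pi \<beta> is a continuous logarithm of (\<alpha> + 1) / (\<alpha> - 1), so
   \<beta> 1 - \<beta> 0 = \<i> (n(\<alpha>, -1) - n(\<alpha>, 1)) with homotopy invariant winding numbers n.  Since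
   Re ((E + 1) / (E - 1)) = (|E|^2 - 1) / |E - 1|^2, Re \<beta> has the sign of Re \<alpha>.  Finally an
   admissible \<alpha> meets the imaginary axis only at its endpoints, so it stays in one closed
   half-plane, necessarily the one containing the point it winds around. *)

section \<open>Covering spaces\<close>

lemma covering_space_cong:
  assumes cov: "covering_space c p S" and eq: "\<And>x. x \<in> c \<Longrightarrow> p' x = p x"
  shows "covering_space c p' S"
proof
  show "continuous_on c p'"
    using covering_space_imp_continuous[OF cov] eq by (simp cong: continuous_on_cong)
  show "p' ` c = S"
    using covering_space_imp_surjective[OF cov] eq by (simp cong: image_cong)
  fix x assume "x \<in> S"
  then obtain T v where T: "x \<in> T" "openin (top_of_set S) T" and v: "\<Union>v = c \<inter> p -` T"
      "\<forall>u \<in> v. openin (top_of_set c) u" "pairwise disjnt v"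
      "\<forall>u \<in> v. \<exists>q. homeomorphism u T p q"
    using cov unfolding covering_space_def by metis
  have "c \<inter> p' -` T = c \<inter> p -` T" using eq by auto
  moreover have "\<forall>u \<in> v. \<exists>q. homeomorphism u T p' q"
  proof
    fix u assume "u \<in> v"
    then obtain q where "homeomorphism u T p q" using v(4) by blast
    moreover have "u \<subseteq> c" using \<open>u \<in> v\<close> v(1) by blast
    ultimately have "homeomorphism u T p' q"
      using eq by (auto intro: homeomorphism_cong)
    then show "\<exists>q. homeomorphism u T p' q" by blast
  qed
  ultimately show "\<exists>T. x \<in> T \<and> openin (top_of_set S) T \<and>
          (\<exists>v. \<Union>v = c \<inter> p' -` T \<and> (\<forall>u \<in> v. openin (top_of_set c) u) \<and>
          pairwise disjnt v \<and> (\<forall>u \<in> v. \<exists>q. homeomorphism u T p' q))"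
    using T v by metis
qed

lemma covering_space_restrict:
  assumes cov: "covering_space c p S" and T: "openin (top_of_set S) T"
  shows "covering_space (c \<inter> p -` T) p T"
proof
  have cont: "continuous_on c p" and im: "p ` c = S"
    using covering_space_imp_continuous[OF cov] covering_space_imp_surjective[OF cov] .
  show "continuous_on (c \<inter> p -` T) p" using cont by (rule continuous_on_subset) blast
  have TS: "T \<subseteq> S" using T by (rule openin_imp_subset)
  then show "p ` (c \<inter> p -` T) = T" using im by blast
  have pT: "openin (top_of_set c) (c \<inter> p -` T)"
    using continuous_openin_preimage[OF cont _ T] im by blast
  fix x assume "x \<in> T"
  then have "x \<in> S" using TS by blast
  then obtain U v where U: "x \<in> U" "openin (top_of_set S) U" and v: "\<Union>v = c \<inter> p -` U"
      "\<forall>u \<in> v. openin (top_of_set c) u" "pairwise disjnt v"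
      "\<forall>u \<in> v. \<exists>q. homeomorphism u U p q"
    using cov unfolding covering_space_def by metis
  define v' where "v' = (\<lambda>u. u \<inter> p -` T) ` v"
  show "\<exists>U'. x \<in> U' \<and> openin (top_of_set T) U' \<and>
          (\<exists>v. \<Union>v = (c \<inter> p -` T) \<inter> p -` U' \<and> (\<forall>u \<in> v. openin (top_of_set (c \<inter> p -` T)) u) \<and>
          pairwise disjnt v \<and> (\<forall>u \<in> v. \<exists>q. homeomorphism u U' p q))"
  proof (intro exI[of _ "U \<inter> T"] exI[of _ v'] conjI)
    show "x \<in> U \<inter> T" using U \<open>x \<in> T\<close> by blast
    show "openin (top_of_set T) (U \<inter> T)"
      using openin_Int[OF U(2) T] TS by (auto intro: openin_subset_trans)
    show "\<Union>v' = (c \<inter> p -` T) \<inter> p -` (U \<inter> T)"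
      using v(1) by (auto simp: v'_def)
    show "\<forall>u' \<in> v'. openin (top_of_set (c \<inter> p -` T)) u'"
    proof
      fix u' assume "u' \<in> v'"
      then obtain u where u: "u \<in> v" "u' = u \<inter> (c \<inter> p -` T)"
        using v(1) by (auto simp: v'_def)
      then have "openin (top_of_set c) u'" using v(2) pT by (simp add: openin_Int)
      then show "openin (top_of_set (c \<inter> p -` T)) u'"
        by (rule openin_subset_trans) (use u in blast)+
    qed
    show "pairwise disjnt v'"
      using v(3) unfolding v'_def pairwise_def disjnt_def by blast
    show "\<forall>u' \<in> v'. \<exists>q. homeomorphism u' (U \<inter> T) p q"
    proof
      fix u' assume "u' \<in> v'"
      then obtain u where u: "u \<in> v" "u' = u \<inter> p -` T" by (auto simp: v'_def)
      then obtain q where q: "homeomorphism u U p q" using v(4) by blast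
      have "p ` u' = U \<inter> T" using homeomorphism_image1[OF q] u by blast
      then have "homeomorphism u' (U \<inter> T) p q"
        using u by (intro homeomorphism_of_subsets[OF q]) auto
      then show "\<exists>q. homeomorphism u' (U \<inter> T) p q" by blast
    qed
  qed
qed

lemma covering_space_comp_homeomorphism:
  assumes cov: "covering_space c p S" and hom: "homeomorphism c' c k k'"
  shows "covering_space c' (p \<circ> k) S"
proof
  have kc: "k ` c' = c" using hom by (rule homeomorphism_image1)
  show "continuous_on c' (p \<circ> k)"
    using homeomorphism_cont1[OF hom] covering_space_imp_continuous[OF cov]
    by (intro continuous_on_compose) (simp_all add: kc)
  show "(p \<circ> k) ` c' = S"
    by (metis image_comp kc covering_space_imp_surjective[OF cov])
  fix x assume "x \<in> S"
  then obtain T v where T: "x \<in> T" "openin (top_of_set S) T" and v: "\<Union>v = c \<inter> p -` T"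
      "\<forall>u \<in> v. openin (top_of_set c) u" "pairwise disjnt v"
      "\<forall>u \<in> v. \<exists>q. homeomorphism u T p q"
    using cov unfolding covering_space_def by metis
  have hom': "homeomorphism c c' k' k" using hom by (rule homeomorphism_symD)
  have inj: "inj_on k' c" using hom' by (metis homeomorphism_apply1 inj_on_inverseI)
  show "\<exists>T. x \<in> T \<and> openin (top_of_set S) T \<and>
          (\<exists>v. \<Union>v = c' \<inter> (p \<circ> k) -` T \<and> (\<forall>u \<in> v. openin (top_of_set c') u) \<and>
          pairwise disjnt v \<and> (\<forall>u \<in> v. \<exists>q. homeomorphism u T (p \<circ> k) q))"
  proof (intro exI[of _ T] exI[of _ "(`) k' ` v"] conjI)
    show "x \<in> T" "openin (top_of_set S) T" by (fact T)+
    have "k' ` (c \<inter> p -` T) = c' \<inter> (p \<circ> k) -` T"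
    proof
      show "k' ` (c \<inter> p -` T) \<subseteq> c' \<inter> (p \<circ> k) -` T"
        using homeomorphism_apply1[OF hom'] homeomorphism_image1[OF hom'] by auto
      show "c' \<inter> (p \<circ> k) -` T \<subseteq> k' ` (c \<inter> p -` T)"
        using homeomorphism_apply2[OF hom'] homeomorphism_image2[OF hom'] by (force intro: rev_image_eqI)
    qed
    then show "\<Union>((`) k' ` v) = c' \<inter> (p \<circ> k) -` T"
      by (simp add: v(1) flip: image_Union)
    show "\<forall>u \<in> (`) k' ` v. openin (top_of_set c') u"
      using v(2) by (auto intro: homeomorphism_imp_open_map[OF hom'])
    have "inj_on k' (\<Union>v)" using inj v(1) by (auto intro: inj_on_subset)
    then show "pairwise disjnt ((`) k' ` v)" using v(3) by (rule disjoint_image)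
    show "\<forall>u' \<in> (`) k' ` v. \<exists>q. homeomorphism u' T (p \<circ> k) q"
    proof
      fix u' assume "u' \<in> (`) k' ` v"
      then obtain u where u: "u \<in> v" "u' = k' ` u" by blast
      then obtain q where q: "homeomorphism u T p q" using v(4) by blast
      have "homeomorphism u u' k' k"
        using u v(1) by (intro homeomorphism_of_subsets[OF hom']) auto
      then have "homeomorphism u' T (p \<circ> k) (k' \<circ> q)"
        using q by (intro homeomorphism_compose) (auto dest: homeomorphism_symD)
      then show "\<exists>q. homeomorphism u' T (p \<circ> k) q" by blast
    qed
  qed
qed

lemma homeomorphism_comp_covering_space:
  assumes cov: "covering_space c p S" and hom: "homeomorphism S S' h h'"
  shows "covering_space c (h \<circ> p) S'"
proof
  have pc: "p ` c = S" by (rule covering_space_imp_surjective[OF cov])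
  show "continuous_on c (h \<circ> p)"
    using covering_space_imp_continuous[OF cov] homeomorphism_cont1[OF hom]
    by (intro continuous_on_compose) (simp_all add: pc)
  show "(h \<circ> p) ` c = S'"
    by (metis image_comp pc homeomorphism_image1[OF hom])
  fix x assume "x \<in> S'"
  then have "h' x \<in> S" "h (h' x) = x"
    using homeomorphism_image2[OF hom] homeomorphism_apply2[OF hom] by blast+
  then obtain T v where T: "h' x \<in> T" "openin (top_of_set S) T" and v: "\<Union>v = c \<inter> p -` T"
      "\<forall>u \<in> v. openin (top_of_set c) u" "pairwise disjnt v"
      "\<forall>u \<in> v. \<exists>q. homeomorphism u T p q"
    using cov unfolding covering_space_def by metis
  have TS: "T \<subseteq> S" using T(2) by (rule openin_imp_subset)
  have hT: "homeomorphism T (h ` T) h h'"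
    using TS by (intro homeomorphism_of_subsets[OF hom]) auto
  have pre: "c \<inter> (h \<circ> p) -` (h ` T) = c \<inter> p -` T"
  proof (intro equalityI subsetI)
    fix y assume y: "y \<in> c \<inter> (h \<circ> p) -` (h ` T)"
    then obtain t where t: "t \<in> T" "h (p y) = h t" by auto
    have "p y \<in> S" using y pc by blast
    then have "p y = t"
      using t TS homeomorphism_apply1[OF hom, of "p y"] homeomorphism_apply1[OF hom, of t] by auto
    then show "y \<in> c \<inter> p -` T" using y t by auto
  qed auto
  show "\<exists>T'. x \<in> T' \<and> openin (top_of_set S') T' \<and>
          (\<exists>v. \<Union>v = c \<inter> (h \<circ> p) -` T' \<and> (\<forall>u \<in> v. openin (top_of_set c) u) \<and>
          pairwise disjnt v \<and> (\<forall>u \<in> v. \<exists>q. homeomorphism u T' (h \<circ> p) q))"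
  proof (intro exI[of _ "h ` T"] exI[of _ v] conjI)
    show "x \<in> h ` T" using T(1) \<open>h (h' x) = x\<close> by (metis imageI)
    show "openin (top_of_set S') (h ` T)" using hom T(2) by (rule homeomorphism_imp_open_map)
    show "\<Union>v = c \<inter> (h \<circ> p) -` (h ` T)" using v(1) pre by simp
    show "\<forall>u \<in> v. \<exists>q. homeomorphism u (h ` T) (h \<circ> p) q"
      using v(4) hT by (blast intro: homeomorphism_compose)
  qed (use v(2,3) in auto)
qed

section \<open>Continuous logarithms and winding numbers\<close>

lemma exp_eq_imp_increment_eq:
  fixes q1 q2 :: "'a::topological_space \<Rightarrow> complex"
  assumes "connected S" "continuous_on S q1" "continuous_on S q2"
    and exp_eq: "\<And>x. x \<in> S \<Longrightarrow> exp (q1 x) = exp (q2 x)"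
    and "a \<in> S" "b \<in> S"
  shows "q1 b - q1 a = q2 b - q2 a"
proof -
  define d where "d = q1 a - q2 a"
  have "exp d = 1" using exp_eq[OF \<open>a \<in> S\<close>] by (simp add: d_def exp_diff)
  then have shifted: "exp (q1 x) = exp (q2 x + d)" if "x \<in> S" for x
    using exp_eq[OF that] by (simp add: exp_add)
  have "q1 b = q2 b + d"
    by (rule covering_space_lift_unique[OF covering_space_exp_punctured_plane,
          where f = "\<lambda>x. exp (q1 x)" and T = S and a = a and ?g1.0 = q1 and ?g2.0 = "\<lambda>x. q2 x + d"])
       (use assms(1-3,5,6) shifted in \<open>simp_all add: d_def continuous_on_add continuous_on_exp\<close>)
  then show ?thesis by (simp add: d_def)
qed

lemma winding_number_eq_log_increment:
  assumes "path p" "\<zeta> \<notin> path_image p" "continuous_on {0..1} q"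
    and "\<And>t. t \<in> {0..1} \<Longrightarrow> p t = \<zeta> + exp (q t)"
  shows "2 * of_real pi * \<i> * winding_number p \<zeta> = q 1 - q 0"
proof -
  obtain q' where q': "path q'" "pathfinish q' - pathstart q' = 2 * of_real pi * \<i> * winding_number p \<zeta>"
      "\<And>t. t \<in> {0..1} \<Longrightarrow> p t = \<zeta> + exp (q' t)"
    using winding_number_as_continuous_log[OF assms(1,2)] by metis
  have "q' 1 - q' 0 = q 1 - q 0"
    using q' assms(3,4) by (intro exp_eq_imp_increment_eq[where S = "{0..1}"]) (auto simp: path_def)
  then show ?thesis using q'(2) by (simp add: pathstart_def pathfinish_def)
qed

lemma path_image_in_closed_half_plane:
  assumes "path \<alpha>" and axis: "\<And>t. t \<in> {0<..<1} \<Longrightarrow> Re (\<alpha> t) \<noteq> 0"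
  shows "path_image \<alpha> \<subseteq> {z. Re z \<le> 0} \<or> path_image \<alpha> \<subseteq> {z. 0 \<le> Re z}"
proof (rule ccontr)
  assume "\<not> ?thesis"
  then obtain s t where st: "s \<in> {0..1}" "t \<in> {0..1}" "0 < Re (\<alpha> s)" "Re (\<alpha> t) < 0"
    by (force simp: path_image_def)
  have "closed_segment s t \<subseteq> {0..1}"
    using st by (intro closed_segment_subset) auto
  then have "connected (\<alpha> ` closed_segment s t)"
    using \<open>path \<alpha>\<close> unfolding path_def
    by (intro connected_continuous_image) (auto intro: continuous_on_subset)
  then have "\<exists>z \<in> \<alpha> ` closed_segment s t. inner 1 z = (0::real)"
    by (rule connected_ivt_hyperplane[of _ "\<alpha> t" "\<alpha> s"]) (use st in \<open>auto simp: inner_complex_def\<close>)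
  then obtain u where u: "u \<in> closed_segment s t" "Re (\<alpha> u) = 0"
    by (auto simp: inner_complex_def)
  then have "u \<in> open_segment s t" using st by (auto simp: open_segment_def)
  moreover have "open_segment s t \<subseteq> {0<..<1}"
    using st by (auto simp: open_segment_eq_real_ivl)
  ultimately show False using axis[of u] u(2) by auto
qed

section \<open>The map f1 o f2\<close>

lemma mem_iZ_iff_exp: "z \<in> iZ \<longleftrightarrow> exp (of_real (2 * pi) * z) = 1"
proof
  assume "z \<in> iZ"
  then obtain k where "z = \<i> * of_int k" by (auto simp: iZ_def)
  then show "exp (of_real (2 * pi) * z) = 1"
    unfolding exp_eq_1 by (simp add: algebra_simps)
next
  assume "exp (of_real (2 * pi) * z) = 1"
  then obtain n :: int where "Re z = 0" "Im z = of_int n"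
    unfolding exp_eq_1 by auto
  then have "z = \<i> * of_int n" by (simp add: complex_eq_iff)
  then show "z \<in> iZ" by (auto simp: iZ_def)
qed

lemma U_log_eq_vimage_exp: "U_log = exp -` (- {0, 1})"
  by (auto simp: U_log_def)

lemma f1_f2_eq_ulog_proj:
  assumes "z \<notin> iZ"
  shows "f1 (f2 z) = ulog_proj (of_real (2 * pi) * z)"
proof -
  define E where "E = exp (of_real pi * z)"
  have E2: "exp (of_real (2 * pi) * z) = E * E"
    unfolding E_def by (simp flip: exp_add add: algebra_simps)
  then have "E * E - 1 \<noteq> 0" using assms mem_iZ_iff_exp by auto
  moreover have "E * E - 1 = (E + 1) * (E - 1)" by (simp add: algebra_simps)
  ultimately have "E + 1 \<noteq> 0" "E - 1 \<noteq> 0" "E * E - 1 \<noteq> 0" by auto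
  then show ?thesis unfolding f1_def f2_def ulog_proj_def E2 E_def[symmetric]
    by (simp add: field_simps)
qed

lemma Re_add_one_divide_diff_one:
  fixes E :: complex
  shows "Re ((E + 1) / (E - 1)) = (cmod E ^ 2 - 1) / cmod (E - 1) ^ 2"
  unfolding Re_divide cmod_power2 by (simp add: power2_eq_square algebra_simps)

lemma sgn_Re_ulog_proj:
  assumes "exp w \<noteq> 1"
  shows "sgn (Re (ulog_proj w)) = sgn (Re w)"
proof -
  have "cmod (exp w - 1) ^ 2 > 0" using assms by simp
  moreover have "cmod (exp w) ^ 2 = exp (2 * Re w)"
    by (simp flip: exp_of_nat_mult)
  moreover have "sgn (exp (2 * Re w) - 1) = sgn (Re w)"
    by (cases "Re w" "0::real" rule: linorder_cases) auto
  ultimately show ?thesis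
    unfolding ulog_proj_def Re_add_one_divide_diff_one by simp
qed

lemma sgn_Re_f1_f2:
  assumes "z \<notin> iZ"
  shows "sgn (Re (f1 (f2 z))) = sgn (Re z)"
  using assms sgn_Re_ulog_proj[of "of_real (2 * pi) * z"]
  by (simp add: f1_f2_eq_ulog_proj mem_iZ_iff_exp sgn_mult)

lemma ulog_proj_eqD:
  assumes "ulog_proj w = a" "exp w \<noteq> 1"
  shows "exp w = (a + 1) / (a - 1)"
proof -
  have "exp w - 1 \<noteq> 0" using assms(2) by simp
  then have "exp w + 1 = a * (exp w - 1)"
    using assms(1) by (auto simp: ulog_proj_def field_simps)
  then have "a \<noteq> 1" "exp w * (a - 1) = a + 1" by (auto simp: algebra_simps)
  then show ?thesis by (simp add: field_simps)
qed

lemma homeomorphism_scale_U_log: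
  "homeomorphism (- iZ) U_log (\<lambda>z. of_real (2 * pi) * z) (\<lambda>w. w / of_real (2 * pi))"
proof (rule homeomorphismI)
  show "continuous_on (- iZ) (\<lambda>z. of_real (2 * pi) * z)"
    by (intro continuous_intros)
  show "continuous_on U_log (\<lambda>w. w / of_real (2 * pi))"
    by (intro continuous_intros) simp
  show "(\<lambda>z. of_real (2 * pi) * z) ` (- iZ) \<subseteq> U_log"
    by (auto simp: U_log_def mem_iZ_iff_exp)
  show "(\<lambda>w. w / of_real (2 * pi)) ` U_log \<subseteq> - iZ"
    by (auto simp: U_log_def mem_iZ_iff_exp)
qed simp_all

lemma homeomorphism_Moebius:
  "homeomorphism (- {0, 1}) (- {-1, 1}) (\<lambda>s::complex. (s + 1) / (s - 1)) (\<lambda>s. (s + 1) / (s - 1))"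
proof (rule homeomorphismI)
  show "continuous_on (- {0, 1}) (\<lambda>s::complex. (s + 1) / (s - 1))"
    by (intro continuous_intros) auto
  show "continuous_on (- {-1, 1}) (\<lambda>s::complex. (s + 1) / (s - 1))"
    by (intro continuous_intros) auto
  have "(s + 1) / (s - 1) \<noteq> -1" "(s + 1) / (s - 1) \<noteq> 1" if "s \<noteq> 1" "s \<noteq> 0" for s :: complex
    using that by (simp_all add: field_simps)
  then show "(\<lambda>s. (s + 1) / (s - 1)) ` (- {0, 1}) \<subseteq> - {-1, 1 :: complex}"
    by auto
  have "(s + 1) / (s - 1) \<noteq> 0" "(s + 1) / (s - 1) \<noteq> 1" if "s \<noteq> 1" "s \<noteq> -1" for s :: complex
    using that by (simp_all add: field_simps add_eq_0_iff)
  then show "(\<lambda>s. (s + 1) / (s - 1)) ` (- {-1, 1}) \<subseteq> - {0, 1 :: complex}"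
    by auto
qed (auto simp: field_simps)

lemma covering_space_ulog_proj: "covering_space U_log ulog_proj (- {-1, 1})"
proof -
  have "openin (top_of_set (- {0})) (- {0, 1 :: complex})"
    by (subst openin_open_eq) (auto intro: open_Compl)
  then have "covering_space U_log exp (- {0, 1})"
    using covering_space_restrict[OF covering_space_exp_punctured_plane]
    by (simp add: U_log_eq_vimage_exp)
  then have "covering_space U_log ((\<lambda>s. (s + 1) / (s - 1)) \<circ> exp) (- {-1, 1})"
    using homeomorphism_Moebius by (rule homeomorphism_comp_covering_space)
  then show ?thesis by (simp add: o_def ulog_proj_def[abs_def])
qed

lemma covering_space_f1_f2: "covering_space (- iZ) (\<lambda>z. f1 (f2 z)) (- {-1, 1})"
proof (rule covering_space_cong)
  show "covering_space (- iZ) (ulog_proj \<circ> (\<lambda>z. of_real (2 * pi) * z)) (- {-1, 1})"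
    using covering_space_ulog_proj homeomorphism_scale_U_log
    by (rule covering_space_comp_homeomorphism)
qed (simp add: f1_f2_eq_ulog_proj)

lemma U_log_conformal_complement_iZ:
  "\<exists>\<phi>. \<phi> holomorphic_on (- iZ) \<and> bij_betw \<phi> (- iZ) U_log \<and>
        inv_into (- iZ) \<phi> holomorphic_on U_log \<and> (\<forall>z\<in>- iZ. ulog_proj (\<phi> z) = f1 (f2 z))"
proof (intro exI conjI)
  let ?\<phi> = "\<lambda>z::complex. of_real (2 * pi) * z"
  show "?\<phi> holomorphic_on (- iZ)" by (intro holomorphic_intros)
  show bij: "bij_betw ?\<phi> (- iZ) U_log"
    using homeomorphism_image1[OF homeomorphism_scale_U_log] by (simp add: bij_betw_def inj_on_def)
  have "(\<lambda>w. w / of_real (2 * pi)) holomorphic_on U_log"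
    by (intro holomorphic_intros) simp
  then show "inv_into (- iZ) ?\<phi> holomorphic_on U_log"
  proof (rule holomorphic_transform)
    fix w assume "w \<in> U_log"
    then have "w / of_real (2 * pi) \<in> - iZ"
      using homeomorphism_image2[OF homeomorphism_scale_U_log] by blast
    then show "w / of_real (2 * pi) = inv_into (- iZ) ?\<phi> w"
      using bij by (intro inv_into_f_eq[symmetric]) (auto simp: bij_betw_def)
  qed
  show "\<forall>z\<in>- iZ. ulog_proj (?\<phi> z) = f1 (f2 z)"
    by (simp add: f1_f2_eq_ulog_proj)
qed

section \<open>Lifts of the generators\<close>

lemma winding_number_loop_a1: "winding_number loop_a1 (-1) = 1" "winding_number loop_a1 1 = 0"
proof -
  have "path loop_a1" unfolding path_def loop_a1_def by (intro continuous_intros)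
  moreover have "path_image loop_a1 \<subseteq> sphere (-1) 1"
    by (auto simp: path_image_def loop_a1_def dist_norm)
  moreover have "pathfinish loop_a1 = pathstart loop_a1"
    by (simp add: loop_a1_def pathfinish_def pathstart_def)
  ultimately show "winding_number loop_a1 1 = 0"
    using sphere_cball by (intro winding_number_zero_outside[of _ "cball (-1) 1"]) (auto simp: dist_norm)
  have "2 * of_real pi * \<i> * winding_number loop_a1 (-1) = 2 * of_real pi * \<i>"
    using \<open>path loop_a1\<close> \<open>path_image loop_a1 \<subseteq> sphere (-1) 1\<close>
    by (subst winding_number_eq_log_increment[where q = "\<lambda>t. 2 * of_real pi * \<i> * of_real t"])
       (auto intro!: continuous_intros simp: loop_a1_def)
  then show "winding_number loop_a1 (-1) = 1" by simp
qed

lemma winding_number_loop_a2: "winding_number loop_a2 1 = 1" "winding_number loop_a2 (-1) = 0"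
proof -
  have "path loop_a2" unfolding path_def loop_a2_def by (intro continuous_intros)
  moreover have "path_image loop_a2 \<subseteq> sphere 1 1"
    by (auto simp: path_image_def loop_a2_def dist_norm)
  moreover have "pathfinish loop_a2 = pathstart loop_a2"
    by (simp add: loop_a2_def pathfinish_def pathstart_def)
  ultimately show "winding_number loop_a2 (-1) = 0"
    using sphere_cball by (intro winding_number_zero_outside[of _ "cball 1 1"]) (auto simp: dist_norm)
  have "2 * of_real pi * \<i> * winding_number loop_a2 1 = 2 * of_real pi * \<i>"
    using \<open>path loop_a2\<close> \<open>path_image loop_a2 \<subseteq> sphere 1 1\<close>
    by (subst winding_number_eq_log_increment[where q = "\<lambda>t. 2 * of_real pi * \<i> * of_real t + of_real pi * \<i>"])
       (auto intro!: continuous_intros simp: loop_a2_def exp_add)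
  then show "winding_number loop_a2 1 = 1" by simp
qed

lemma winding_number_admissible_rep:
  assumes "admissible_rep \<alpha> c" "w \<in> {-1, 1}"
  shows "winding_number \<alpha> w = winding_number c w"
proof -
  have "homotopic_paths (- {w}) \<alpha> c"
    using assms by (auto simp: admissible_rep_def elim: homotopic_paths_subset)
  then show ?thesis by (rule winding_number_homotopic_paths)
qed

lemma admissible_rep_axis:
  assumes "admissible_rep \<alpha> c" "t \<in> {0..1}" "Re (\<alpha> t) = 0"
  shows "t = 0 \<or> t = 1"
  using assms by (auto simp: admissible_rep_def)

lemma admissible_rep_in_half_plane:
  assumes adm: "admissible_rep \<alpha> c"
  shows "winding_number c (-1) \<noteq> 0 \<Longrightarrow> path_image \<alpha> \<subseteq> {z. Re z \<le> 0}"
    and "winding_number c 1 \<noteq> 0 \<Longrightarrow> path_image \<alpha> \<subseteq> {z. 0 \<le> Re z}"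
proof -
  have \<alpha>: "path \<alpha>" "pathfinish \<alpha> = pathstart \<alpha>"
    using adm by (auto simp: admissible_rep_def)
  have "Re (\<alpha> t) \<noteq> 0" if "t \<in> {0<..<1}" for t
    using admissible_rep_axis[OF adm, of t] that by auto
  then have half: "path_image \<alpha> \<subseteq> {z. Re z \<le> 0} \<or> path_image \<alpha> \<subseteq> {z. 0 \<le> Re z}"
    by (rule path_image_in_closed_half_plane[OF \<alpha>(1)])
  show "path_image \<alpha> \<subseteq> {z. Re z \<le> 0}" if "winding_number c (-1) \<noteq> 0"
    using half winding_number_zero_outside[OF \<alpha>(1) convex_halfspace_Re_ge \<alpha>(2), of "-1" 0]
      that winding_number_admissible_rep[OF adm, of "-1"] by auto
  show "path_image \<alpha> \<subseteq> {z. 0 \<le> Re z}" if "winding_number c 1 \<noteq> 0"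
    using half winding_number_zero_outside[OF \<alpha>(1) convex_halfspace_Re_le \<alpha>(2), of 1 0]
      that winding_number_admissible_rep[OF adm, of 1] by auto
qed

lemma exp_2pi_base_point: "exp (of_real (2 * pi) * (- \<i> / 2 + \<i> * of_int k)) = -1"
proof -
  have "of_real (2 * pi) * (- \<i> / 2 + \<i> * of_int k) = ((2 * of_int (k - 1) + 1) * pi) * \<i>"
    by (simp add: algebra_simps)
  then show ?thesis by (metis exp_integer_2pi_plus1 Ints_of_int)
qed

lemma is_lift_exists:
  assumes "path \<alpha>" "path_image \<alpha> \<subseteq> - {-1, 1}" "pathstart \<alpha> = 0"
  shows "\<exists>\<beta>. is_lift \<alpha> (- \<i> / 2 + \<i> * of_int k) \<beta>"
proof -
  let ?z = "- \<i> / 2 + \<i> * of_int k"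
  have "?z \<notin> iZ" using exp_2pi_base_point[of k] by (simp add: mem_iZ_iff_exp)
  then have "?z \<in> - iZ" "pathstart \<alpha> = f1 (f2 ?z)"
    using f1_f2_eq_ulog_proj exp_2pi_base_point assms(3) by (auto simp: ulog_proj_def)
  then obtain \<beta> where "path \<beta>" "path_image \<beta> \<subseteq> - iZ" "pathstart \<beta> = ?z"
      "\<And>t. t \<in> {0..1} \<Longrightarrow> f1 (f2 (\<beta> t)) = \<alpha> t"
    using covering_space_lift_path_strong[OF covering_space_f1_f2 _ assms(1,2)] by metis
  then show ?thesis unfolding is_lift_def by blast
qed

lemma is_lift_pathfinish:
  assumes lift: "is_lift \<alpha> z0 \<beta>" and "path \<alpha>" and \<alpha>_image: "path_image \<alpha> \<subseteq> - {-1, 1}"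
  shows "pathfinish \<beta> = z0 + \<i> * (winding_number \<alpha> (-1) - winding_number \<alpha> 1)"
proof -
  have \<beta>: "path \<beta>" "\<beta> 0 = z0" "\<And>t. t \<in> {0..1} \<Longrightarrow> \<beta> t \<notin> iZ"
      "\<And>t. t \<in> {0..1} \<Longrightarrow> f1 (f2 (\<beta> t)) = \<alpha> t"
    using lift unfolding is_lift_def pathstart_def path_image_def by blast+
  obtain qa where qa: "path qa" "pathfinish qa - pathstart qa = 2 * of_real pi * \<i> * winding_number \<alpha> (-1)"
      "\<And>t. t \<in> {0..1} \<Longrightarrow> \<alpha> t = -1 + exp (qa t)"
    using winding_number_as_continuous_log[OF \<open>path \<alpha>\<close>, of "-1"] \<alpha>_image by auto
  obtain qb where qb: "path qb" "pathfinish qb - pathstart qb = 2 * of_real pi * \<i> * winding_number \<alpha> 1"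
      "\<And>t. t \<in> {0..1} \<Longrightarrow> \<alpha> t = 1 + exp (qb t)"
    using winding_number_as_continuous_log[OF \<open>path \<alpha>\<close>, of 1] \<alpha>_image by auto
  have "exp (of_real (2 * pi) * \<beta> t) = exp (qa t - qb t)" if t: "t \<in> {0..1}" for t
  proof -
    have "exp (of_real (2 * pi) * \<beta> t) = (\<alpha> t + 1) / (\<alpha> t - 1)"
      using \<beta>(3,4)[OF t] by (intro ulog_proj_eqD) (auto simp: f1_f2_eq_ulog_proj mem_iZ_iff_exp)
    also have "\<dots> = exp (qa t - qb t)"
      using qa(3)[OF t] qb(3)[OF t] by (simp add: exp_diff)
    finally show ?thesis .
  qed
  then have "of_real (2 * pi) * \<beta> 1 - of_real (2 * pi) * \<beta> 0 = (qa 1 - qb 1) - (qa 0 - qb 0)"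
    using \<beta>(1) qa(1) qb(1) unfolding path_def
    by (intro exp_eq_imp_increment_eq[where S = "{0..1}"]) (auto intro!: continuous_intros)
  then have "of_real (2 * pi) * (\<beta> 1 - \<beta> 0)
      = of_real (2 * pi) * (\<i> * (winding_number \<alpha> (-1) - winding_number \<alpha> 1))"
    using qa(2) qb(2) by (simp add: pathstart_def pathfinish_def algebra_simps)
  then have "\<beta> 1 - \<beta> 0 = \<i> * (winding_number \<alpha> (-1) - winding_number \<alpha> 1)"
    by (simp only: mult_cancel_left) simp
  then show ?thesis using \<beta>(2) by (simp add: pathfinish_def algebra_simps)
qed

lemma is_lift_sgn_Re:
  assumes "is_lift \<alpha> z0 \<beta>" "t \<in> {0..1}"
  shows "sgn (Re (\<beta> t)) = sgn (Re (\<alpha> t))"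
proof -
  have "\<beta> t \<notin> iZ" "f1 (f2 (\<beta> t)) = \<alpha> t"
    using assms unfolding is_lift_def path_image_def by blast+
  then show ?thesis using sgn_Re_f1_f2 by metis
qed

lemma is_lift_half_plane:
  assumes "is_lift \<alpha> z0 \<beta>"
  shows "path_image \<alpha> \<subseteq> {z. Re z \<le> 0} \<Longrightarrow> path_image \<beta> \<subseteq> {z. Re z \<le> 0}"
    and "path_image \<alpha> \<subseteq> {z. 0 \<le> Re z} \<Longrightarrow> path_image \<beta> \<subseteq> {z. 0 \<le> Re z}"
proof -
  have sign: "Re (\<beta> t) \<le> 0 \<longleftrightarrow> Re (\<alpha> t) \<le> 0" "0 \<le> Re (\<beta> t) \<longleftrightarrow> 0 \<le> Re (\<alpha> t)"
    if "t \<in> {0..1}" for t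
    using is_lift_sgn_Re[OF assms that] by (metis sgn_le_0_iff zero_le_sgn_iff)+
  show "path_image \<beta> \<subseteq> {z. Re z \<le> 0}" if "path_image \<alpha> \<subseteq> {z. Re z \<le> 0}"
    using that sign(1) by (auto simp: path_image_def)
  show "path_image \<beta> \<subseteq> {z. 0 \<le> Re z}" if "path_image \<alpha> \<subseteq> {z. 0 \<le> Re z}"
    using that sign(2) by (auto simp: path_image_def)
qed

lemma admissible_rep_lift:
  assumes adm: "admissible_rep \<alpha> c"
  shows "\<exists>\<beta>. is_lift \<alpha> (- \<i> / 2 + \<i> * of_int k) \<beta>"
    and "is_lift \<alpha> z0 \<beta> \<Longrightarrow>
           pathfinish \<beta> = z0 + \<i> * (winding_number c (-1) - winding_number c 1)"
    and "is_lift \<alpha> z0 \<beta> \<Longrightarrow> t \<in> {0..1} \<Longrightarrow> Re (\<beta> t) = 0 \<Longrightarrow> t = 0 \<or> t = 1"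
proof -
  have \<alpha>: "path \<alpha>" "path_image \<alpha> \<subseteq> - {-1, 1}" "pathstart \<alpha> = 0"
    using adm by (auto simp: admissible_rep_def)
  then show "\<exists>\<beta>. is_lift \<alpha> (- \<i> / 2 + \<i> * of_int k) \<beta>"
    by (rule is_lift_exists)
  show "pathfinish \<beta> = z0 + \<i> * (winding_number c (-1) - winding_number c 1)"
    if "is_lift \<alpha> z0 \<beta>"
    using is_lift_pathfinish[OF that \<alpha>(1,2)] winding_number_admissible_rep[OF adm] by simp
  show "t = 0 \<or> t = 1" if "is_lift \<alpha> z0 \<beta>" "t \<in> {0..1}" "Re (\<beta> t) = 0"
  proof -
    have "sgn (Re (\<alpha> t)) = 0" using is_lift_sgn_Re[OF that(1,2)] that(3) by simp
    then show ?thesis using admissible_rep_axis[OF adm that(2)] by (simp add: sgn_0_0)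
  qed
qed

theorem proposition3:
  fixes \<alpha>1 \<alpha>2 :: "real \<Rightarrow> complex"
  assumes "admissible_rep \<alpha>1 loop_a1"
      and "admissible_rep \<alpha>2 loop_a2"
  shows
    "(\<exists>\<phi>. \<phi> holomorphic_on (- iZ) \<and> bij_betw \<phi> (- iZ) U_log \<and>
          inv_into (- iZ) \<phi> holomorphic_on U_log \<and>
          (\<forall>z\<in>- iZ. ulog_proj (\<phi> z) = f1 (f2 z)))
     \<and> covering_space (- iZ) (\<lambda>z. f1 (f2 z)) (- {-1, 1})
     \<and> (\<forall>k::int.
          (\<exists>\<beta>. is_lift \<alpha>1 (- \<i>/2 + \<i> * of_int k) \<beta>) \<and>
          (\<forall>\<beta>. is_lift \<alpha>1 (- \<i>/2 + \<i> * of_int k) \<beta> \<longrightarrow>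
               pathfinish \<beta> = - \<i>/2 + \<i> * of_int (k + 1) \<and>
               path_image \<beta> \<subseteq> {z. Re z \<le> 0} \<and>
               (\<forall>t\<in>{0..1}. Re (\<beta> t) = 0 \<longrightarrow> t = 0 \<or> t = 1)) \<and>
          (\<exists>\<beta>. is_lift \<alpha>2 (- \<i>/2 + \<i> * of_int k) \<beta>) \<and>
          (\<forall>\<beta>. is_lift \<alpha>2 (- \<i>/2 + \<i> * of_int k) \<beta> \<longrightarrow>
               pathfinish \<beta> = - \<i>/2 + \<i> * of_int (k - 1) \<and>
               path_image \<beta> \<subseteq> {z. Re z \<ge> 0} \<and>
               (\<forall>t\<in>{0..1}. Re (\<beta> t) = 0 \<longrightarrow> t = 0 \<or> t = 1)))"
proof -
  have left: "path_image \<alpha>1 \<subseteq> {z. Re z \<le> 0}"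
    using admissible_rep_in_half_plane(1)[OF assms(1)] winding_number_loop_a1 by simp
  have right: "path_image \<alpha>2 \<subseteq> {z. 0 \<le> Re z}"
    using admissible_rep_in_half_plane(2)[OF assms(2)] winding_number_loop_a2 by simp
  have lift1: "pathfinish \<beta> = - \<i>/2 + \<i> * of_int (k + 1) \<and> path_image \<beta> \<subseteq> {z. Re z \<le> 0} \<and>
      (\<forall>t\<in>{0..1}. Re (\<beta> t) = 0 \<longrightarrow> t = 0 \<or> t = 1)"
    if "is_lift \<alpha>1 (- \<i>/2 + \<i> * of_int k) \<beta>" for k \<beta>
    using admissible_rep_lift(2,3)[OF assms(1) that] is_lift_half_plane(1)[OF that left]
      winding_number_loop_a1 by (simp add: algebra_simps)
  have lift2: "pathfinish \<beta> = - \<i>/2 + \<i> * of_int (k - 1) \<and> path_image \<beta> \<subseteq> {z. Re z \<ge> 0} \<and>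
      (\<forall>t\<in>{0..1}. Re (\<beta> t) = 0 \<longrightarrow> t = 0 \<or> t = 1)"
    if "is_lift \<alpha>2 (- \<i>/2 + \<i> * of_int k) \<beta>" for k \<beta>
    using admissible_rep_lift(2,3)[OF assms(2) that] is_lift_half_plane(2)[OF that right]
      winding_number_loop_a2 by (simp add: algebra_simps)
  show ?thesis
    using U_log_conformal_complement_iZ covering_space_f1_f2 lift1 lift2
      admissible_rep_lift(1)[OF assms(1)] admissible_rep_lift(1)[OF assms(2)]
    by blast
qed

end
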